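(* Let $K_1\subsetneq K_2$ be fields and $R=K_1+xK_2[x]$ (polynomials over $K_2$ with constant term in $K_1$). Then $R$ is atomic, for every $a\in K_2\setminus\{0\}$ the element $ax$ is irreducible in $R$ but not absolutely irreducible, $R$ has prime elements, and every absolutely irreducible element of $R$ is prime.
   Context: For an integral domain $R$, factorization notions refer to the monoid $(R\setminus\{0\},\cdot)$. $R$ is atomic if every non-zero non-unit is a product of irreducibles. Two factorizations into irreducibles $a_1\cdots a_n=b_1\cdots b_m$ of the same element are essentially the same if $n=m$ and, after re-indexing, $a_j$ and $b_j$ are associated for all $j$. An irreducible $r$ is absolutely irreducible if for every $n\in\mathbb N$, every factorization of $r^n$ into irreducibles is essentially the same as $r^n=r\cdots r$. *)

theory Defs
  imports "HOL-Computational_Algebra.Polynomial"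
begin

text \<open>Factorization notions relative to a multiplicatively closed subset S of an
integral domain (here: a subring of a polynomial ring), i.e. for the monoid S - {0}.\<close>

definition is_subfield :: "'a::field set \<Rightarrow> bool" where
  "is_subfield K \<longleftrightarrow> 0 \<in> K \<and> 1 \<in> K \<and> (\<forall>a\<in>K. \<forall>b\<in>K. a + b \<in> K \<and> a * b \<in> K)
     \<and> (\<forall>a\<in>K. - a \<in> K) \<and> (\<forall>a\<in>K. a \<noteq> 0 \<longrightarrow> inverse a \<in> K)"

text \<open>The ring K1 + x K2[x]: polynomials over K2 with constant term in K1.\<close>
definition KxRing :: "'a::field set \<Rightarrow> 'a poly set" where
  "KxRing K1 = {p. coeff p 0 \<in> K1}"

definition sdvd :: "'b::comm_ring_1 set \<Rightarrow> 'b \<Rightarrow> 'b \<Rightarrow> bool" where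
  "sdvd S a b \<longleftrightarrow> (\<exists>c\<in>S. b = a * c)"

definition sunit :: "'b::comm_ring_1 set \<Rightarrow> 'b \<Rightarrow> bool" where
  "sunit S u \<longleftrightarrow> u \<in> S \<and> (\<exists>v\<in>S. u * v = 1)"

definition sassoc :: "'b::comm_ring_1 set \<Rightarrow> 'b \<Rightarrow> 'b \<Rightarrow> bool" where
  "sassoc S a b \<longleftrightarrow> (\<exists>u. sunit S u \<and> b = u * a)"

definition sirred :: "'b::comm_ring_1 set \<Rightarrow> 'b \<Rightarrow> bool" where
  "sirred S r \<longleftrightarrow> r \<in> S \<and> r \<noteq> 0 \<and> \<not> sunit S r \<and>
     (\<forall>a\<in>S. \<forall>b\<in>S. r = a * b \<longrightarrow> sunit S a \<or> sunit S b)"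

definition sprime :: "'b::comm_ring_1 set \<Rightarrow> 'b \<Rightarrow> bool" where
  "sprime S p \<longleftrightarrow> p \<in> S \<and> p \<noteq> 0 \<and> \<not> sunit S p \<and>
     (\<forall>a\<in>S. \<forall>b\<in>S. sdvd S p (a * b) \<longrightarrow> sdvd S p a \<or> sdvd S p b)"

definition satomic :: "'b::comm_ring_1 set \<Rightarrow> bool" where
  "satomic S \<longleftrightarrow> (\<forall>r\<in>S. r \<noteq> 0 \<and> \<not> sunit S r \<longrightarrow>
     (\<exists>fs. (\<forall>f\<in>set fs. sirred S f) \<and> prod_list fs = r))"

definition ess_same :: "'b::comm_ring_1 set \<Rightarrow> 'b list \<Rightarrow> 'b list \<Rightarrow> bool" where
  "ess_same S xs ys \<longleftrightarrow> length xs = length ys \<and>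
     (\<exists>\<sigma>. bij_betw \<sigma> {..<length xs} {..<length ys} \<and>
          (\<forall>j<length xs. sassoc S (xs ! j) (ys ! \<sigma> j)))"

definition sabs_irred :: "'b::comm_ring_1 set \<Rightarrow> 'b \<Rightarrow> bool" where
  "sabs_irred S r \<longleftrightarrow> sirred S r \<and>
     (\<forall>n::nat. \<forall>fs. (\<forall>f\<in>set fs. sirred S f) \<and> prod_list fs = r ^ n \<longrightarrow>
        ess_same S fs (replicate n r))"

end

theory Submission
  imports Defs "HOL-Computational_Algebra.Polynomial_Factorial"
begin

text \<open>The units of \<open>R = K\<^sub>1 + x K\<^sub>2[x]\<close> are the nonzero constants of \<open>K\<^sub>1\<close>, so degree is
additive on factorizations and induction on the degree gives atomicity. An element \<open>r\<close> with
nonzero constant term that is irreducible in \<open>R\<close> stays irreducible in \<open>K\<^sub>2[x]\<close> (rescale any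
factorization by a constant so that both factors lie in \<open>R\<close>), hence is prime there; and if
\<open>r\<close> divides an element of \<open>R\<close> in \<open>K\<^sub>2[x]\<close>, the cofactor has constant term in \<open>K\<^sub>1\<close>, so \<open>r\<close> is
prime in \<open>R\<close>. The irreducibles with zero constant term are exactly the monomials \<open>ax\<close>, and
these are not absolutely irreducible: for \<open>t \<notin> K\<^sub>1\<close>, \<open>(ax)\<^sup>2 = (tax)(t\<^sup>-\<^sup>1ax)\<close> and \<open>tax\<close> is not
associated with \<open>ax\<close>.\<close>

lemma subfield_inverse: "is_subfield K \<Longrightarrow> a \<in> K \<Longrightarrow> inverse a \<in> K"
  unfolding is_subfield_def by (cases "a = 0") auto

lemma subfield_mult: "is_subfield K \<Longrightarrow> a \<in> K \<Longrightarrow> b \<in> K \<Longrightarrow> a * b \<in> K"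
  unfolding is_subfield_def by auto

lemma subfield_0_1: "is_subfield K \<Longrightarrow> 0 \<in> K \<and> 1 \<in> K"
  unfolding is_subfield_def by auto

lemma ess_same_replicate_imp_sassoc:
  assumes "ess_same S fs (replicate n r)" and "f \<in> set fs"
  shows "sassoc S f r"
proof -
  obtain j where j: "j < length fs" "f = fs ! j" using assms(2) by (auto simp: in_set_conv_nth)
  obtain \<sigma> where \<sigma>: "bij_betw \<sigma> {..<length fs} {..<n}"
      "\<forall>j<length fs. sassoc S (fs ! j) (replicate n r ! \<sigma> j)"
    using assms(1) unfolding ess_same_def by auto
  have "\<sigma> j < n" using bij_betw_apply[OF \<sigma>(1)] j(1) by auto
  then show ?thesis using \<sigma>(2) j by auto
qed

lemma sunit_KxRing_iff:
  fixes u :: "'a::field poly"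
  assumes "is_subfield K"
  shows "sunit (KxRing K) u \<longleftrightarrow> (\<exists>c\<in>K. c \<noteq> 0 \<and> u = [:c:])"
proof
  assume u: "sunit (KxRing K) u"
  then obtain v where "u * v = 1" unfolding sunit_def by auto
  then have "is_unit u" by (metis dvd_triv_left)
  then obtain c where "u = [:c:]" "c dvd 1" by (auto simp: is_unit_poly_iff)
  then have "c \<noteq> 0" by auto
  moreover have "c \<in> K" using u \<open>u = [:c:]\<close> unfolding sunit_def KxRing_def by auto
  ultimately show "\<exists>c\<in>K. c \<noteq> 0 \<and> u = [:c:]" using \<open>u = [:c:]\<close> by blast
next
  assume "\<exists>c\<in>K. c \<noteq> 0 \<and> u = [:c:]"
  then obtain c where c: "c \<in> K" "c \<noteq> 0" "u = [:c:]" by blast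
  have "[:inverse c:] \<in> KxRing K" "u * [:inverse c:] = 1"
    using c subfield_inverse[OF assms] by (auto simp: KxRing_def one_pCons)
  moreover have "u \<in> KxRing K" using c unfolding KxRing_def by simp
  ultimately show "sunit (KxRing K) u" unfolding sunit_def by blast
qed

lemma sunit_KxRing_iff_degree:
  fixes u :: "'a::field poly"
  assumes "is_subfield K" and "u \<in> KxRing K" and "u \<noteq> 0"
  shows "sunit (KxRing K) u \<longleftrightarrow> degree u = 0"
proof
  assume "sunit (KxRing K) u"
  then show "degree u = 0" by (auto simp: sunit_KxRing_iff[OF assms(1)])
next
  assume "degree u = 0"
  then have u_const: "[:coeff u 0:] = u" by (rule degree_0_id)
  moreover from this have "coeff u 0 \<noteq> 0" using \<open>u \<noteq> 0\<close> by force
  moreover have "coeff u 0 \<in> K" using assms(2) by (simp add: KxRing_def)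
  ultimately show "sunit (KxRing K) u"
    unfolding sunit_KxRing_iff[OF assms(1)] by (intro bexI[of _ "coeff u 0"]) auto
qed

lemma sunit_KxRing_iff_is_unit:
  fixes u :: "'a::field poly"
  assumes "is_subfield K" and "u \<in> KxRing K" and "u \<noteq> 0"
  shows "sunit (KxRing K) u \<longleftrightarrow> is_unit u"
  by (simp only: sunit_KxRing_iff_degree[OF assms] is_unit_iff_degree[OF assms(3)])

lemma not_sunit_KxRing_if_degree_pos:
  fixes u :: "'a::field poly"
  assumes "is_subfield K" and "degree u > 0"
  shows "\<not> sunit (KxRing K) u"
  using assms by (auto simp: sunit_KxRing_iff)

lemma sassoc_KxRing_imp_smult:
  fixes p q :: "'a::field poly"
  assumes "is_subfield K" and "sassoc (KxRing K) p q"
  shows "\<exists>c\<in>K. c \<noteq> 0 \<and> q = smult c p"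
  using assms unfolding sassoc_def sunit_KxRing_iff[OF assms(1)] by auto

lemma sirred_KxRing_degree_1:
  fixes r :: "'a::field poly"
  assumes K: "is_subfield K" and r: "r \<in> KxRing K" "degree r = 1"
  shows "sirred (KxRing K) r"
  unfolding sirred_def
proof (intro conjI ballI impI)
  show "r \<in> KxRing K" "r \<noteq> 0" "\<not> sunit (KxRing K) r"
    using r not_sunit_KxRing_if_degree_pos[OF K] by auto
  fix a b assume ab: "a \<in> KxRing K" "b \<in> KxRing K" "r = a * b"
  then have "a \<noteq> 0" "b \<noteq> 0" using r by auto
  moreover have "degree a + degree b = 1" using ab r \<open>a \<noteq> 0\<close> \<open>b \<noteq> 0\<close> by (metis degree_mult_eq)
  ultimately show "sunit (KxRing K) a \<or> sunit (KxRing K) b"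
    using ab sunit_KxRing_iff_degree[OF K] by auto
qed

lemma sirred_KxRing_monom_1:
  fixes a :: "'a::field"
  assumes "is_subfield K" and "a \<noteq> 0"
  shows "sirred (KxRing K) [:0, a:]"
  using assms subfield_0_1[OF assms(1)] by (intro sirred_KxRing_degree_1) (auto simp: KxRing_def)

lemma satomic_KxRing:
  fixes K :: "'a::field set"
  assumes K: "is_subfield K"
  shows "satomic (KxRing K)"
  unfolding satomic_def
proof (intro ballI impI)
  fix r assume "r \<in> KxRing K" "r \<noteq> 0 \<and> \<not> sunit (KxRing K) r"
  then show "\<exists>fs. (\<forall>f\<in>set fs. sirred (KxRing K) f) \<and> prod_list fs = r"
  proof (induction "degree r" arbitrary: r rule: less_induct)
    case less
    show ?case
    proof (cases "sirred (KxRing K) r")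
      case True
      then show ?thesis by (intro exI[of _ "[r]"]) auto
    next
      case False
      then obtain a b where ab: "a \<in> KxRing K" "b \<in> KxRing K" "r = a * b"
        "\<not> sunit (KxRing K) a" "\<not> sunit (KxRing K) b"
        using less.prems unfolding sirred_def by blast
      then have nz: "a \<noteq> 0" "b \<noteq> 0" using less.prems by auto
      then have "degree a > 0" "degree b > 0"
        using ab sunit_KxRing_iff_degree[OF K] by auto
      moreover have "degree r = degree a + degree b" using ab nz degree_mult_eq by metis
      ultimately obtain fa fb where
          "(\<forall>f\<in>set fa. sirred (KxRing K) f) \<and> prod_list fa = a"
          "(\<forall>f\<in>set fb. sirred (KxRing K) f) \<and> prod_list fb = b"
        using less.hyps[of a] less.hyps[of b] ab nz by auto
      then show ?thesis using ab by (intro exI[of _ "fa @ fb"]) auto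
    qed
  qed
qed

lemma sirred_KxRing_imp_irreducible:
  fixes r :: "'a::field poly"
  assumes K: "is_subfield K" and r: "sirred (KxRing K) r" and c0: "coeff r 0 \<noteq> 0"
  shows "irreducible r"
proof (rule irreducibleI)
  have r_in: "r \<in> KxRing K" and "r \<noteq> 0" and r_nonunit: "\<not> sunit (KxRing K) r"
    and r_irr: "\<And>a b. a \<in> KxRing K \<Longrightarrow> b \<in> KxRing K \<Longrightarrow> r = a * b \<Longrightarrow>
                  sunit (KxRing K) a \<or> sunit (KxRing K) b"
    using r unfolding sirred_def by blast+
  show "r \<noteq> 0" by fact
  show "\<not> is_unit r" using r_nonunit sunit_KxRing_iff_is_unit[OF K r_in \<open>r \<noteq> 0\<close>] by simp
  fix g h assume gh: "r = g * h"
  have g0: "coeff g 0 \<noteq> 0" using gh c0 by (auto simp: coeff_mult_0)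
  define g' where "g' = smult (inverse (coeff g 0)) g"
  define h' where "h' = smult (coeff g 0) h"
  have "g' \<in> KxRing K" using g0 subfield_0_1[OF K] by (simp add: g'_def KxRing_def)
  moreover have "h' \<in> KxRing K"
    using r_in by (simp add: KxRing_def h'_def gh coeff_mult_0)
  moreover have "r = g' * h'" unfolding g'_def h'_def using gh g0 by simp
  ultimately have "sunit (KxRing K) g' \<or> sunit (KxRing K) h'" by (rule r_irr)
  moreover have "degree g' = degree g" "degree h' = degree h" using g0 by (simp_all add: g'_def h'_def)
  ultimately have "degree g = 0 \<or> degree h = 0"
    using not_sunit_KxRing_if_degree_pos[OF K] by (metis neq0_conv)
  moreover have "g \<noteq> 0" "h \<noteq> 0" using gh \<open>r \<noteq> 0\<close> by auto
  ultimately show "is_unit g \<or> is_unit h" by (auto simp: is_unit_iff_degree)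
qed

lemma sirred_KxRing_coeff_0_eq_0:
  fixes r :: "'a::field poly"
  assumes K: "is_subfield K" and r: "sirred (KxRing K) r" and c0: "coeff r 0 = 0"
  shows "\<exists>a. a \<noteq> 0 \<and> r = [:0, a:]"
proof -
  obtain q where q: "r = pCons 0 q" using c0 by (cases r) auto
  have "q \<noteq> 0" using q r by (auto simp: sirred_def)
  \<comment> \<open>Split off \<open>x\<close> with a scalar chosen so that the cofactor has constant term \<open>0\<close> or \<open>1\<close>.\<close>
  define s where "s = (if coeff q 0 = 0 then 1 else coeff q 0)"
  have "s \<noteq> 0" by (simp add: s_def)
  have "r = [:0, s:] * smult (inverse s) q" using q \<open>s \<noteq> 0\<close> by simp
  moreover have "[:0, s:] \<in> KxRing K" "smult (inverse s) q \<in> KxRing K"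
    using subfield_0_1[OF K] \<open>s \<noteq> 0\<close> by (auto simp: KxRing_def s_def)
  moreover have "\<not> sunit (KxRing K) [:0, s:]"
    using \<open>s \<noteq> 0\<close> by (intro not_sunit_KxRing_if_degree_pos[OF K]) simp
  ultimately have "sunit (KxRing K) (smult (inverse s) q)"
    using r unfolding sirred_def by blast
  then obtain a where "a \<noteq> 0" "smult (inverse s) q = [:a:]"
    by (auto simp: sunit_KxRing_iff[OF K])
  then have "q = smult s [:a:]" using \<open>s \<noteq> 0\<close> by (metis smult_smult right_inverse smult_1_left)
  then have "r = [:0, s * a:]" using q by simp
  then show ?thesis using \<open>s \<noteq> 0\<close> \<open>a \<noteq> 0\<close> by auto
qed

lemma not_sabs_irred_KxRing_monom_1:
  fixes a :: "'a::field"
  assumes K: "is_subfield K" and t: "t \<notin> K" and a: "a \<noteq> 0"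
  shows "\<not> sabs_irred (KxRing K) [:0, a:]"
proof
  assume abs_irr: "sabs_irred (KxRing K) [:0, a:]"
  have "t \<noteq> 0" using t subfield_0_1[OF K] by auto
  let ?fs = "[[:0, t * a:], [:0, inverse t * a:]]"
  have "\<forall>f\<in>set ?fs. sirred (KxRing K) f"
    using a \<open>t \<noteq> 0\<close> by (auto intro: sirred_KxRing_monom_1[OF K])
  moreover have "prod_list ?fs = [:0, a:] ^ 2"
    using \<open>t \<noteq> 0\<close> by (simp add: power2_eq_square)
  ultimately have "ess_same (KxRing K) ?fs (replicate 2 [:0, a:])"
    using abs_irr unfolding sabs_irred_def by blast
  then have "sassoc (KxRing K) [:0, t * a:] [:0, a:]"
    by (rule ess_same_replicate_imp_sassoc) simp
  then obtain c where "c \<in> K" "[:0, a:] = smult c [:0, t * a:]"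
    using sassoc_KxRing_imp_smult[OF K] by blast
  then have "a = c * (t * a)"
    by (metis coeff_smult coeff_pCons_0 coeff_pCons_Suc)
  then have "c * t = 1" using a by (metis mult.assoc mult_cancel_right2)
  then have "t = inverse c" by (metis inverse_unique mult.commute)
  then show False using t subfield_inverse[OF K \<open>c \<in> K\<close>] by simp
qed

lemma sprime_KxRing_if_irreducible:
  fixes r :: "'a::field poly"
  assumes K: "is_subfield K" and r: "r \<in> KxRing K" "coeff r 0 \<noteq> 0" and irr: "irreducible r"
  shows "sprime (KxRing K) r"
  unfolding sprime_def
proof (intro conjI ballI impI)
  show "r \<in> KxRing K" "r \<noteq> 0" using r by auto
  show "\<not> sunit (KxRing K) r"
    using irreducible_not_unit[OF irr] sunit_KxRing_iff_is_unit[OF K r(1) \<open>r \<noteq> 0\<close>] by simp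
  have sdvd_if_dvd: "sdvd (KxRing K) r f" if f: "f \<in> KxRing K" "r dvd f" for f
  proof -
    obtain d where d: "f = r * d" using f(2) by auto
    then have "coeff d 0 = inverse (coeff r 0) * coeff f 0"
      using r(2) by (simp add: coeff_mult_0)
    then have "d \<in> KxRing K"
      using r(1) f(1) by (simp add: KxRing_def subfield_mult[OF K] subfield_inverse[OF K])
    then show ?thesis using d unfolding sdvd_def by auto
  qed
  fix a b assume ab: "a \<in> KxRing K" "b \<in> KxRing K" "sdvd (KxRing K) r (a * b)"
  then have "r dvd a * b" unfolding sdvd_def by auto
  then have "r dvd a \<or> r dvd b"
    by (rule prime_elem_dvd_multD[OF field_poly_irreducible_imp_prime[OF irr]])
  then show "sdvd (KxRing K) r a \<or> sdvd (KxRing K) r b" using sdvd_if_dvd ab by blast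
qed

lemma sprime_KxRing_if_sirred:
  fixes r :: "'a::field poly"
  assumes K: "is_subfield K" and r: "sirred (KxRing K) r" "coeff r 0 \<noteq> 0"
  shows "sprime (KxRing K) r"
  using r sirred_KxRing_imp_irreducible[OF K r]
  by (intro sprime_KxRing_if_irreducible[OF K]) (auto simp: sirred_def)

theorem mainTheorem6:
  fixes K1 :: "'a::field set"
  assumes "is_subfield K1" and "K1 \<noteq> UNIV"
  shows "satomic (KxRing K1)
    \<and> (\<forall>a::'a. a \<noteq> 0 \<longrightarrow> sirred (KxRing K1) [:0, a:] \<and> \<not> sabs_irred (KxRing K1) [:0, a:])
    \<and> (\<exists>p. sprime (KxRing K1) p)
    \<and> (\<forall>r. sabs_irred (KxRing K1) r \<longrightarrow> sprime (KxRing K1) r)"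
proof -
  note K = assms(1)
  obtain t where t: "t \<notin> K1" using assms(2) by auto
  have "sprime (KxRing K1) [:1, 1:]"
    using subfield_0_1[OF K]
    by (intro sprime_KxRing_if_sirred[OF K] sirred_KxRing_degree_1[OF K]) (auto simp: KxRing_def)
  moreover have "sprime (KxRing K1) r" if abs_irr: "sabs_irred (KxRing K1) r" for r
  proof -
    have irr: "sirred (KxRing K1) r" using abs_irr unfolding sabs_irred_def by blast
    have "coeff r 0 \<noteq> 0"
    proof
      assume "coeff r 0 = 0"
      then obtain a where "a \<noteq> 0" "r = [:0, a:]" using sirred_KxRing_coeff_0_eq_0[OF K irr] by blast
      then show False using not_sabs_irred_KxRing_monom_1[OF K t] abs_irr by simp
    qed
    then show ?thesis by (rule sprime_KxRing_if_sirred[OF K irr])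
  qed
  ultimately show ?thesis
    using satomic_KxRing[OF K] sirred_KxRing_monom_1[OF K] not_sabs_irred_KxRing_monom_1[OF K t]
    by auto
qed

end
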